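(* Let $\beta=\log_2(3/2)$ and \[ g(x,y)=\bigl((2x(1-x))^{1/\beta}+(x-y)^{1/\beta}\bigr)^\beta-2(x+y^2)+(x+y)^2 . \] Then $g(x,y)\ge0$ for all $x,y\in[0,1]$ with $x(2x-1)\le y\le x$. *)

theory Defs
  imports Complex_Main
begin

definition beta :: real where "beta = log 2 (3/2)"

definition g :: "real \<Rightarrow> real \<Rightarrow> real" where
  "g x y = ((2*x*(1-x)) powr (1/beta) + (x-y) powr (1/beta)) powr beta
           - 2*(x + y^2) + (x+y)^2"

end

theory Submission
  imports Defs "HOL-Analysis.Analysis"
begin

text \<open>
  Put \<open>p = 1/\<beta>\<close>, \<open>a = 2x(1-x)\<close> and \<open>b = x - y\<close>. Then \<open>0 \<le> b \<le> a \<le> 1/2\<close>, and since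
  \<open>-2(x + y\<^sup>2) + (x + y)\<^sup>2 = -(a + b\<^sup>2)\<close>, the claim is \<open>(a + b\<^sup>2)\<^sup>p \<le> a\<^sup>p + b\<^sup>p\<close>.
  With \<open>r = b/a\<close> one has \<open>b\<^sup>2/a = a r\<^sup>2 \<le> r\<^sup>p/2\<close> because \<open>a \<le> 1/2\<close> and \<open>p \<le> 2\<close>, and
  convexity of \<open>t\<^sup>p\<close> on the chord from \<open>1\<close> to \<open>3/2\<close>, where \<open>(3/2)\<^sup>p = 2\<close>, gives
  \<open>(1 + r\<^sup>p/2)\<^sup>p \<le> 1 + r\<^sup>p\<close>.
\<close>

lemma powr_chord_le:
  fixes p s c :: real
  assumes "1 \<le> p" "0 \<le> s" "s \<le> 1" "0 < c"
  shows "(1 + s * (c - 1)) powr p \<le> 1 + s * (c powr p - 1)"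
proof -
  have "((1 - s) *\<^sub>R 1 + s *\<^sub>R c) powr p \<le> (1 - s) * 1 powr p + s * c powr p"
    by (rule convex_onD[OF powr_convex[OF \<open>1 \<le> p\<close>]]) (use assms in auto)
  thus ?thesis by (simp add: algebra_simps)
qed

lemma le_two_if_three_halves_powr_le_two:
  fixes p :: real
  assumes "(3/2) powr p \<le> 2"
  shows "p \<le> 2"
proof (rule ccontr)
  assume "\<not> p \<le> 2"
  hence "(3/2::real) powr 2 < (3/2) powr p" by (intro powr_less_mono) auto
  with assms show False by (simp add: power2_eq_square)
qed

lemma sum_sq_powr_le_powr_add:
  fixes p a b :: real
  assumes p: "1 \<le> p" "(3/2) powr p \<le> 2"
    and ab: "0 \<le> b" "b \<le> a" "a \<le> 1/2"
  shows "(a + b\<^sup>2) powr p \<le> a powr p + b powr p"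
proof (cases "b = 0")
  case True
  thus ?thesis by simp
next
  case False
  with ab have "0 < b" "0 < a" by auto
  define r where "r = b / a"
  have r: "0 < r" "r \<le> 1" using \<open>0 < b\<close> \<open>0 < a\<close> \<open>b \<le> a\<close> by (auto simp: r_def)
  have b_eq: "b = a * r" using \<open>0 < a\<close> by (simp add: r_def)
  have "r\<^sup>2 \<le> r powr p"
    using powr_mono'[OF le_two_if_three_halves_powr_le_two[OF p(2)]] r by simp
  moreover have "a * r\<^sup>2 \<le> 1/2 * r\<^sup>2"
    using \<open>a \<le> 1/2\<close> by (intro mult_right_mono) auto
  ultimately have "a * r\<^sup>2 \<le> r powr p / 2"
    by linarith
  hence "(1 + a * r\<^sup>2) powr p \<le> (1 + r powr p * (3/2 - 1)) powr p"
    using \<open>0 < a\<close> p(1) by (intro powr_mono2) auto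
  also have "\<dots> \<le> 1 + r powr p * ((3/2) powr p - 1)"
    using r p(1) by (intro powr_chord_le powr_le1) auto
  also have "\<dots> \<le> 1 + r powr p * 1"
    using p(2) by (intro add_left_mono mult_left_mono) auto
  finally have chord: "(1 + a * r\<^sup>2) powr p \<le> 1 + r powr p" by simp
  have "(a + b\<^sup>2) powr p = a powr p * (1 + a * r\<^sup>2) powr p"
    using \<open>0 < a\<close> by (simp add: b_eq power2_eq_square algebra_simps flip: powr_mult)
  also have "\<dots> \<le> a powr p * (1 + r powr p)"
    using chord by (intro mult_left_mono) auto
  also have "\<dots> = a powr p + b powr p"
    by (simp add: b_eq powr_mult distrib_left)
  finally show ?thesis .
qed

lemma beta_pos: "0 < beta"
  by (simp add: beta_def)

lemma one_le_inverse_beta: "1 \<le> 1 / beta"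
proof -
  have "log 2 (3/2::real) < 1" by (subst log_less_iff) auto
  thus ?thesis using beta_pos by (simp add: beta_def)
qed

lemma three_halves_powr_inverse_beta: "(3/2::real) powr (1 / beta) = 2"
proof -
  have "(3/2::real) powr (1 / beta) = (2 powr beta) powr (1 / beta)"
    by (simp add: beta_def)
  also have "\<dots> = 2" using beta_pos by (simp add: powr_powr)
  finally show ?thesis .
qed

theorem proposition2p3:
  fixes x y :: real
  assumes "0 \<le> x" "x \<le> 1" "0 \<le> y" "y \<le> 1"
    and "x*(2*x-1) \<le> y" "y \<le> x"
  shows "g x y \<ge> 0"
proof -
  define p a b where "p = 1 / beta" and "a = 2 * x * (1 - x)" and "b = x - y"
  have "0 \<le> (2 * x - 1)\<^sup>2" by simp
  hence "a \<le> 1/2" by (simp add: a_def power2_eq_square algebra_simps)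
  moreover have "0 \<le> b" "b \<le> a" using assms by (auto simp: a_def b_def algebra_simps)
  ultimately have "(a + b\<^sup>2) powr p \<le> a powr p + b powr p"
    using one_le_inverse_beta three_halves_powr_inverse_beta
    by (intro sum_sq_powr_le_powr_add) (auto simp: p_def)
  hence "((a + b\<^sup>2) powr p) powr beta \<le> (a powr p + b powr p) powr beta"
    using beta_pos by (intro powr_mono2) auto
  moreover have "((a + b\<^sup>2) powr p) powr beta = a + b\<^sup>2"
    using beta_pos \<open>0 \<le> b\<close> \<open>b \<le> a\<close> by (simp add: powr_powr p_def)
  moreover have "g x y = (a powr p + b powr p) powr beta - (a + b\<^sup>2)"
    by (simp add: g_def a_def b_def p_def power2_eq_square algebra_simps)
  ultimately show ?thesis by simp
qed

end
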